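(* In the setting described in the context, let $\epsilon\in(0,1)$, and suppose $r\le\frac\Delta2$ and \[pn_{\min}\ge 16\max\Big\{1,\Big(\frac{r}{\Delta/2-r}\Big)^2\Big\}\log\frac{k(d+2)}{\epsilon}.\] Then with probability at least $1-\epsilon$, simultaneously for every $S,T\in\Gamma$ with $S\ne T$ and every $i\in S$, $\|x_i-c_{S'}\|<\|x_i-c_{T'}\|$.
   Context: Let $X=\{x_i\}_{i\in[n]}$ be points in $\mathbb{R}^d$ and $\Gamma$ a partition of $[n]$ into $k$ nonempty sets. For nonempty $S\subseteq[n]$, $c_S:=\frac1{|S|}\sum_{i\in S}x_i$. Let $\Delta:=\min_{S\ne T\in\Gamma}\|c_S-c_T\|$, $r:=\max_{S\in\Gamma}\max_{i\in S}\|x_i-c_S\|$, $n_{\min}:=\min_{S\in\Gamma}|S|$. Let $p\in(0,1]$ and let $W\subseteq[n]$ be random, containing each index independently with probability $p$; for $S\in\Gamma$ put $S':=S\cap W$. The quantity $\frac{r}{\Delta/2-r}$ is interpreted as $+\infty$ when $r=\Delta/2$. Logarithms are natural. *)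

theory Defs
  imports "HOL-Analysis.Analysis" "HOL-Probability.Probability" "HOL-Library.Disjoint_Sets"
begin

definition centroid :: "(nat \<Rightarrow> 'a::real_vector) \<Rightarrow> nat set \<Rightarrow> 'a" where
  "centroid x S = (1 / real (card S)) *\<^sub>R (\<Sum>i\<in>S. x i)"

definition min_sep :: "(nat \<Rightarrow> 'a::real_normed_vector) \<Rightarrow> nat set set \<Rightarrow> real" where
  "min_sep x \<Gamma> = Min {norm (centroid x S - centroid x T) | S T. S \<in> \<Gamma> \<and> T \<in> \<Gamma> \<and> S \<noteq> T}"

definition max_rad :: "(nat \<Rightarrow> 'a::real_normed_vector) \<Rightarrow> nat set set \<Rightarrow> real" where
  "max_rad x \<Gamma> = Max {norm (x i - centroid x S) | S i. S \<in> \<Gamma> \<and> i \<in> S}"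

definition min_size :: "nat set set \<Rightarrow> nat" where
  "min_size \<Gamma> = Min (card ` \<Gamma>)"

definition sep_ratio :: "real \<Rightarrow> real \<Rightarrow> ereal" where
  "sep_ratio r \<Delta> = (if r = \<Delta> / 2 then \<infinity> else ereal (r / (\<Delta> / 2 - r)))"

text \<open>Random subset W of {0..<n}: each index independently with probability p.\<close>
definition sample_pmf :: "nat \<Rightarrow> real \<Rightarrow> (nat \<Rightarrow> bool) pmf" where
  "sample_pmf n p = Pi_pmf {..<n} False (\<lambda>_. bernoulli_pmf p)"

end

theory Submission
  imports Defs
begin

text \<open>
  For a cluster S with subsample S' = S \<inter> W, both |S'| - p|S| and
  |S'| (c(S') - c(S)) are sums over j \<in> S of independent centred terms (w j - p) and
  (w j - p) (x j - c(S)). A dimension-free Bernstein bound controls such sums: if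
  l |c j| \<le> 1/4 then E cosh (l |\<Sum>j. (w j - p) c j|) \<le> exp (2/3 p \<Sum>j. (l |c j|)^2),
  proved one coordinate at a time from the convexity of t \<mapsto> cosh (sqrt t). Hence, except
  with probability 4 exp (-4L/3), S' is nonempty and |c(S') - c(S)| < \<Delta>/2 - r; if this
  holds for every cluster, each point is strictly nearer to its own subsample centroid by
  the triangle inequality. A union bound over the k clusters with L = log (k (d + 2) / \<epsilon>)
  finishes the proof; the dimension d only enters through d + 2 \<ge> 3.
\<close>

section \<open>Elementary inequalities for cosh\<close>

lemma cosh_sqrt_sums:
  fixes x :: real assumes "0 \<le> x"
  shows "(\<lambda>n. if even n then x ^ (n div 2) / fact n else 0) sums cosh (sqrt x)"
proof -
  have "(if even n then sqrt x ^ n /\<^sub>R fact n else 0) = (if even n then x ^ (n div 2) / fact n else 0)" for n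
  proof (cases "even n")
    case True
    then have "sqrt x ^ n = sqrt x ^ (2 * (n div 2))" by simp
    also have "\<dots> = x ^ (n div 2)" using assms by (simp only: power_mult real_sqrt_pow2)
    finally show ?thesis using True by (simp add: divide_inverse mult.commute)
  qed simp
  with cosh_converges[of "sqrt x"] show ?thesis by simp
qed

lemma convex_on_cosh_sqrt: "convex_on {0..} (\<lambda>x::real. cosh (sqrt x))"
proof (rule convex_onI)
  fix t x y :: real
  assume t: "0 < t" "t < 1" and xy: "x \<in> {0..}" "y \<in> {0..}"
  let ?a = "\<lambda>z n. if even n then z ^ (n div 2) / fact n else 0"
  have pow: "convex_on {0..} (\<lambda>z::real. z ^ m)" for m
    by (cases "even m") (auto intro: convex_power_odd convex_on_subset[OF convex_power_even])
  have "?a ((1 - t) *\<^sub>R x + t *\<^sub>R y) n \<le> (1 - t) * ?a x n + t * ?a y n" for n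
    using convex_onD[OF pow, of t x y "n div 2"] t xy
    by (auto simp flip: add_divide_distrib intro!: divide_right_mono)
  moreover have "?a ((1 - t) *\<^sub>R x + t *\<^sub>R y) sums cosh (sqrt ((1 - t) *\<^sub>R x + t *\<^sub>R y))"
    using t xy by (intro cosh_sqrt_sums) simp
  moreover have "(\<lambda>n. (1 - t) * ?a x n + t * ?a y n) sums ((1 - t) * cosh (sqrt x) + t * cosh (sqrt y))"
    using xy by (intro sums_add sums_mult cosh_sqrt_sums) auto
  ultimately show "cosh (sqrt ((1 - t) *\<^sub>R x + t *\<^sub>R y)) \<le> (1 - t) * cosh (sqrt x) + t * cosh (sqrt y)"
    by (rule sums_le)
qed (rule convex_real_interval)

lemma sinh_real_ge_self:
  assumes "0 \<le> (s::real)" shows "s \<le> sinh s"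
proof -
  have "((\<lambda>s. sinh s - s) has_real_derivative cosh u - 1) (at u)" for u
    by (auto intro!: derivative_eq_intros)
  from deriv_nonneg_imp_mono[OF this _ assms] show ?thesis by (simp add: cosh_real_ge_1)
qed

lemma exp_le_quadratic:
  fixes u :: real
  assumes u: "0 \<le> u" "u \<le> 1/4"
  shows "exp u \<le> 1 + u + 2/3 * u^2"
proof -
  have "(\<lambda>s. 1 + s + 2/3 * s^2 - exp s) 0 \<le> (\<lambda>s. 1 + s + 2/3 * s^2 - exp s) u"
  proof (rule deriv_nonneg_imp_mono[of 0 u _ "\<lambda>s. 1 + 4/3 * s - exp s"])
    fix s :: real
    show "((\<lambda>s. 1 + s + 2/3 * s^2 - exp s) has_real_derivative 1 + 4/3 * s - exp s) (at s)"
      by (auto intro!: derivative_eq_intros simp: field_simps)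
    assume s: "s \<in> {0..u}"
    have "exp s \<le> 1 + s + s^2" using exp_bound[of s] s u by auto
    moreover have "s^2 \<le> s / 3" using s u by (auto simp: power2_eq_square intro: mult_left_mono[of s "1/3" s, simplified])
    ultimately show "0 \<le> 1 + 4/3 * s - exp s" by simp
  qed (use u in auto)
  then show ?thesis by simp
qed

lemma cosh_sqrt_quadratic_le:
  fixes A S U :: real
  assumes A: "0 \<le> A" and U: "\<bar>U\<bar> \<le> S"
  shows "cosh (sqrt (A^2 + 2*A*U + S^2)) \<le> cosh A + U * sinh A + cosh A * (exp S - 1 - S)"
proof (cases "S = 0")
  case True
  then show ?thesis using U by simp
next
  case False
  with U have S: "0 < S" by simp
  define t where "t = (U + S) / (2 * S)"
  have t: "0 \<le> t" "t \<le> 1" using U S by (auto simp: t_def field_simps)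
  have U_eq: "U = (2*t - 1) * S" using S by (simp add: t_def field_simps)
  have "A^2 + 2*A*U + S^2 = (1 - t) *\<^sub>R (A - S)^2 + t *\<^sub>R (A + S)^2"
    by (simp add: U_eq power2_eq_square algebra_simps)
  then have "cosh (sqrt (A^2 + 2*A*U + S^2)) \<le> (1 - t) * cosh (sqrt ((A - S)^2)) + t * cosh (sqrt ((A + S)^2))"
    using convex_onD[OF convex_on_cosh_sqrt t, of "(A - S)^2" "(A + S)^2"] by simp
  also have "\<dots> = cosh A * cosh S + (2*t - 1) * sinh A * sinh S"
    using A S by (simp add: cosh_add cosh_diff algebra_simps)
  also have "\<dots> \<le> cosh A + U * sinh A + cosh A * (exp S - 1 - S)"
  proof -
    have "(2*t - 1) * sinh A \<le> cosh A"
      using t A sinh_le_cosh_real[of A] mult_right_mono[of "2*t - 1" 1 "sinh A"] by simp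
    then have "(2*t - 1) * sinh A * (sinh S - S) \<le> cosh A * (sinh S - S)"
      using sinh_real_ge_self[of S] S by (intro mult_right_mono) auto
    then show ?thesis by (simp add: U_eq flip: cosh_plus_sinh) (simp add: algebra_simps)
  qed
  finally show ?thesis .
qed

lemma cosh_norm_add_le:
  fixes z v :: "'a::real_inner" and l :: real
  assumes l: "0 \<le> l"
  shows "cosh (l * norm (z + v)) \<le> cosh (l * norm z) + l * (inner z v / norm z) * sinh (l * norm z)
           + cosh (l * norm z) * (exp (l * norm v) - 1 - l * norm v)"
  \<comment> \<open>for \<open>z = 0\<close> the middle term is \<open>0\<close>, as \<open>x / 0 = 0\<close>\<close>
proof -
  define U where "U = l * (inner z v / norm z)"
  have "\<bar>inner z v\<bar> / norm z \<le> norm v"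
    using Cauchy_Schwarz_ineq2[of z v] by (cases "z = 0") (simp_all add: divide_le_eq mult.commute)
  from mult_left_mono[OF this l] have U: "\<bar>U\<bar> \<le> l * norm v"
    using l by (simp add: U_def abs_mult)
  have "(norm (z + v))^2 = (norm z)^2 + 2 * inner z v + (norm v)^2"
    by (simp add: power2_norm_eq_inner inner_add_left inner_add_right inner_commute)
  then have "(l * norm z)^2 + 2 * (l * norm z) * U + (l * norm v)^2 = (l * norm (z + v))^2"
    by (cases "z = 0") (simp_all add: U_def power_mult_distrib power2_eq_square algebra_simps)
  with cosh_sqrt_quadratic_le[of "l * norm z" U "l * norm v"] U l show ?thesis
    by (simp add: U_def)
qed

lemma cosh_norm_bernoulli_shift_le:
  fixes z c :: "'a::real_inner" and l p :: real
  assumes l: "0 \<le> l" and p: "0 \<le> p" "p \<le> 1" and c: "l * norm c \<le> 1/4"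
  shows "p * cosh (l * norm (z + (1 - p) *\<^sub>R c)) + (1 - p) * cosh (l * norm (z + (- p) *\<^sub>R c))
         \<le> cosh (l * norm z) * exp (2/3 * p * (l * norm c)^2)"
proof -
  define \<theta> where "\<theta> = l * norm c"
  define Ch where "Ch = cosh (l * norm z)"
  define L where "L = l * (inner z c / norm z) * sinh (l * norm z)"
  have shift: "cosh (l * norm (z + s *\<^sub>R c)) \<le> Ch + s * L + Ch * (2/3 * (s * \<theta>)^2)"
    if s: "\<bar>s\<bar> \<le> 1" for s
  proof -
    have "\<bar>s\<bar> * \<theta> \<le> 1/4"
      using s c mult_mono[of "\<bar>s\<bar>" 1 \<theta> "1/4"] l by (simp add: \<theta>_def)
    then have "exp (\<bar>s\<bar> * \<theta>) - 1 - \<bar>s\<bar> * \<theta> \<le> 2/3 * (s * \<theta>)^2"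
      using exp_le_quadratic[of "\<bar>s\<bar> * \<theta>"] l by (simp add: \<theta>_def power_mult_distrib)
    then have "Ch * (exp (\<bar>s\<bar> * \<theta>) - 1 - \<bar>s\<bar> * \<theta>) \<le> Ch * (2/3 * (s * \<theta>)^2)"
      by (rule mult_left_mono) (simp add: Ch_def)
    moreover have "cosh (l * norm (z + s *\<^sub>R c)) \<le> Ch + s * L + Ch * (exp (\<bar>s\<bar> * \<theta>) - 1 - \<bar>s\<bar> * \<theta>)"
      using cosh_norm_add_le[OF l, of z "s *\<^sub>R c"]
      by (simp add: Ch_def L_def \<theta>_def mult_ac)
    ultimately show ?thesis by linarith
  qed
  \<comment> \<open>the first-order terms \<open>p (1 - p) L\<close> and \<open>- (1 - p) p L\<close> cancel\<close>
  have "p * cosh (l * norm (z + (1 - p) *\<^sub>R c)) + (1 - p) * cosh (l * norm (z + (- p) *\<^sub>R c))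
     \<le> p * (Ch + (1 - p) * L + Ch * (2/3 * ((1 - p) * \<theta>)^2))
        + (1 - p) * (Ch + (- p) * L + Ch * (2/3 * (- p * \<theta>)^2))"
    using p by (intro add_mono mult_left_mono shift) auto
  also have "\<dots> = Ch * (1 + 2/3 * \<theta>^2 * (p * (1 - p)))"
    by (simp add: power2_eq_square field_simps)
  also have "\<dots> \<le> Ch * (1 + 2/3 * \<theta>^2 * p)"
    using p by (intro mult_left_mono add_left_mono mult_left_le) (auto simp: Ch_def)
  also have "\<dots> \<le> Ch * exp (2/3 * p * \<theta>^2)"
    by (intro mult_left_mono) (simp_all add: Ch_def mult_ac exp_ge_add_one_self)
  finally show ?thesis by (simp add: Ch_def \<theta>_def)
qed

section \<open>A Bernstein bound for Bernoulli-weighted sums of vectors\<close>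

lemma nn_integral_Pi_pmf_bernoulli_insert:
  fixes F :: "('a \<Rightarrow> bool) \<Rightarrow> real"
  assumes I: "finite I" "j \<notin> I" and p: "0 \<le> p" "p \<le> 1" and F: "\<And>w. 0 \<le> F w"
  shows "(\<integral>\<^sup>+w. F w \<partial>Pi_pmf (insert j I) False (\<lambda>_. bernoulli_pmf p))
       = (\<integral>\<^sup>+f. ennreal (p * F (f(j:=True)) + (1 - p) * F (f(j:=False))) \<partial>Pi_pmf I False (\<lambda>_. bernoulli_pmf p))"
proof -
  let ?Q = "Pi_pmf I False (\<lambda>_. bernoulli_pmf p)"
  have "(\<integral>\<^sup>+w. F w \<partial>Pi_pmf (insert j I) False (\<lambda>_. bernoulli_pmf p))
      = (\<integral>\<^sup>+y. \<integral>\<^sup>+f. F (f(j:=y)) \<partial>?Q \<partial>bernoulli_pmf p)"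
    by (simp add: Pi_pmf_insert[OF I] nn_integral_pair_pmf')
  also have "\<dots> = (\<integral>\<^sup>+f. F (f(j:=True)) \<partial>?Q) * ennreal p + (\<integral>\<^sup>+f. F (f(j:=False)) \<partial>?Q) * ennreal (1 - p)"
    using p by simp
  also have "\<dots> = (\<integral>\<^sup>+f. ennreal (F (f(j:=True))) * ennreal p + ennreal (F (f(j:=False))) * ennreal (1 - p) \<partial>?Q)"
    by (simp add: nn_integral_add nn_integral_multc)
  also have "\<dots> = (\<integral>\<^sup>+f. ennreal (p * F (f(j:=True)) + (1 - p) * F (f(j:=False))) \<partial>?Q)"
    using p F by (intro nn_integral_cong) (simp add: ennreal_mult' ennreal_plus[symmetric] mult.commute)
  finally show ?thesis .
qed

lemma nn_integral_cosh_norm_bernoulli_sum_le: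
  fixes c :: "'a \<Rightarrow> 'b::real_inner"
  assumes I: "finite I" and p: "0 \<le> p" "p \<le> 1" and l: "0 \<le> l"
    and c: "\<And>j. j \<in> I \<Longrightarrow> l * norm (c j) \<le> 1/4"
  shows "(\<integral>\<^sup>+w. cosh (l * norm (\<Sum>j\<in>I. (of_bool (w j) - p) *\<^sub>R c j)) \<partial>Pi_pmf I False (\<lambda>_. bernoulli_pmf p))
         \<le> exp (2/3 * p * (\<Sum>j\<in>I. (l * norm (c j))^2))"
  using I c
proof (induction I rule: finite_induct)
  case empty
  then show ?case by simp
next
  case (insert j I)
  let ?Q = "Pi_pmf I False (\<lambda>_. bernoulli_pmf p)"
  let ?V = "\<lambda>w. \<Sum>i\<in>I. (of_bool (w i) - p) *\<^sub>R c i"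
  let ?E = "exp (2/3 * p * (l * norm (c j))^2)"
  have V: "(\<Sum>i\<in>insert j I. (of_bool ((f(j:=b)) i) - p) *\<^sub>R c i) = ?V f + (of_bool b - p) *\<^sub>R c j" for f b
  proof -
    have "(\<Sum>i\<in>I. (of_bool ((f(j:=b)) i) - p) *\<^sub>R c i) = ?V f"
      using insert.hyps by (intro sum.cong) auto
    then show ?thesis using insert.hyps by (simp add: add.commute)
  qed
  have "(\<integral>\<^sup>+w. cosh (l * norm (\<Sum>i\<in>insert j I. (of_bool (w i) - p) *\<^sub>R c i)) \<partial>Pi_pmf (insert j I) False (\<lambda>_. bernoulli_pmf p))
      = (\<integral>\<^sup>+f. ennreal (p * cosh (l * norm (?V f + (1 - p) *\<^sub>R c j))
                      + (1 - p) * cosh (l * norm (?V f + (- p) *\<^sub>R c j))) \<partial>?Q)"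
    by (subst nn_integral_Pi_pmf_bernoulli_insert[OF insert.hyps p]) (simp_all only: V, simp_all)
  also have "\<dots> \<le> (\<integral>\<^sup>+f. ennreal (cosh (l * norm (?V f)) * ?E) \<partial>?Q)"
    using insert.prems by (intro nn_integral_mono ennreal_leI cosh_norm_bernoulli_shift_le l p) auto
  also have "\<dots> = (\<integral>\<^sup>+f. cosh (l * norm (?V f)) \<partial>?Q) * ennreal ?E"
    by (simp add: ennreal_mult' nn_integral_multc)
  also have "\<dots> \<le> ennreal (exp (2/3 * p * (\<Sum>i\<in>I. (l * norm (c i))^2))) * ennreal ?E"
    using insert.prems by (intro mult_right_mono insert.IH) auto
  also have "\<dots> = exp (2/3 * p * (\<Sum>i\<in>insert j I. (l * norm (c i))^2))"
    using insert.hyps by (simp add: ennreal_mult'[symmetric] exp_add[symmetric] algebra_simps)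
  finally show ?case .
qed

lemma prob_norm_bernoulli_sum_ge_le:
  fixes c :: "'a \<Rightarrow> 'b::real_inner"
  assumes I: "finite I" and p: "0 \<le> p" "p \<le> 1" and l: "0 \<le> l"
    and c: "\<And>j. j \<in> I \<Longrightarrow> l * norm (c j) \<le> 1/4" and t: "0 \<le> t"
  shows "measure_pmf.prob (Pi_pmf I False (\<lambda>_. bernoulli_pmf p)) {w. t \<le> norm (\<Sum>j\<in>I. (of_bool (w j) - p) *\<^sub>R c j)}
         \<le> 2 * exp (2/3 * p * (\<Sum>j\<in>I. (l * norm (c j))^2) - l * t)"
proof -
  let ?Q = "Pi_pmf I False (\<lambda>_. bernoulli_pmf p)"
  let ?V = "\<lambda>w. \<Sum>j\<in>I. (of_bool (w j) - p) *\<^sub>R c j"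
  let ?B = "exp (2/3 * p * (\<Sum>j\<in>I. (l * norm (c j))^2))"
  define C where "C = cosh (l * t)"
  have C: "0 < C" by (simp add: C_def)
  have "emeasure ?Q {w. t \<le> norm (?V w)} \<le> (\<integral>\<^sup>+w. ennreal (cosh (l * norm (?V w)) / C) \<partial>?Q)"
  proof (subst nn_integral_indicator[symmetric], simp, intro nn_integral_mono)
    fix w
    have "C \<le> cosh (l * norm (?V w))" if "t \<le> norm (?V w)"
      using that l t mult_left_mono[OF that l] by (simp add: C_def cosh_real_nonneg_le_iff)
    then show "indicator {w. t \<le> norm (?V w)} w \<le> ennreal (cosh (l * norm (?V w)) / C)"
      using C by (auto simp: indicator_def intro!: ennreal_leI)
  qed
  also have "\<dots> = (\<integral>\<^sup>+w. cosh (l * norm (?V w)) \<partial>?Q) * ennreal (1 / C)"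
    using C by (simp add: divide_inverse ennreal_mult nn_integral_multc)
  also have "\<dots> \<le> ennreal ?B * ennreal (1 / C)"
    by (intro mult_right_mono nn_integral_cosh_norm_bernoulli_sum_le I p l c) auto
  finally have "measure_pmf.prob ?Q {w. t \<le> norm (?V w)} \<le> ?B / C"
    using C by (auto simp: measure_pmf.emeasure_eq_measure ennreal_mult'[symmetric] ennreal_le_iff2
        divide_le_0_iff)
  also have "\<dots> \<le> ?B / (exp (l * t) / 2)"
    using C by (intro divide_left_mono) (auto simp: C_def cosh_def)
  also have "\<dots> = 2 * exp (2/3 * p * (\<Sum>j\<in>I. (l * norm (c j))^2) - l * t)"
    by (simp add: exp_diff)
  finally show ?thesis .
qed

lemma prob_bernoulli_sum_deviation_le:
  fixes v :: "'a \<Rightarrow> 'b::real_inner" and p :: real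
  assumes I: "finite I" "S \<subseteq> I" and p: "0 \<le> p" "p \<le> 1" and \<delta>: "0 < \<delta>" "\<delta> \<le> R"
    and v: "\<And>j. j \<in> S \<Longrightarrow> norm (v j) \<le> R"
    and big: "16 * R^2 * L \<le> \<delta>^2 * (p * card S)"
  shows "measure_pmf.prob (Pi_pmf I False (\<lambda>_. bernoulli_pmf p))
           {w. \<delta> * (p * card S) / 2 \<le> norm (\<Sum>j\<in>S. (of_bool (w j) - p) *\<^sub>R v j)}
         \<le> 2 * exp (- (4/3) * L)"
proof -
  define c where "c j = (if j \<in> S then v j else 0)" for j
  \<comment> \<open>this scale keeps \<open>l |c j| \<le> 1/4\<close> and makes the exponent \<open>- \<delta>^2 p |S| / (12 R^2)\<close>\<close>
  define l where "l = \<delta> / (4 * R^2)"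
  have R: "0 < R" using \<delta> by simp
  have l: "0 \<le> l" using \<delta> by (simp add: l_def)
  have sum_eq: "(\<Sum>j\<in>S. (of_bool (w j) - p) *\<^sub>R v j) = (\<Sum>j\<in>I. (of_bool (w j) - p) *\<^sub>R c j)" for w
    using I by (intro sum.mono_neutral_cong_left) (auto simp: c_def)
  have lc: "l * norm (c j) \<le> \<delta> / (4 * R)" for j
  proof -
    have "l * norm (c j) \<le> l * R" using v l R by (auto simp: c_def intro: mult_left_mono)
    also have "\<dots> = \<delta> / (4 * R)" by (simp add: l_def power2_eq_square)
    finally show ?thesis .
  qed
  have "\<delta> / (4 * R) \<le> 1/4" using \<delta> by (simp add: divide_le_eq)
  with lc have lc4: "l * norm (c j) \<le> 1/4" for j
    by (meson order.trans)
  have "(\<Sum>j\<in>I. (l * norm (c j))^2) = (\<Sum>j\<in>S. (l * norm (c j))^2)"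
    using I by (intro sum.mono_neutral_cong_right) (auto simp: c_def)
  also have "\<dots> \<le> (\<Sum>j\<in>S. (\<delta> / (4 * R))^2)"
    using l by (intro sum_mono power_mono lc) auto
  finally have sq: "(\<Sum>j\<in>I. (l * norm (c j))^2) \<le> card S * (\<delta> / (4 * R))^2" by simp
  have "measure_pmf.prob (Pi_pmf I False (\<lambda>_. bernoulli_pmf p))
           {w. \<delta> * (p * card S) / 2 \<le> norm (\<Sum>j\<in>I. (of_bool (w j) - p) *\<^sub>R c j)}
        \<le> 2 * exp (2/3 * p * (\<Sum>j\<in>I. (l * norm (c j))^2) - l * (\<delta> * (p * card S) / 2))"
    using \<delta> p by (intro prob_norm_bernoulli_sum_ge_le I l lc4) auto
  also have "\<dots> \<le> 2 * exp (- (4/3) * L)"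
  proof -
    define N where "N = \<delta>^2 * (p * card S) / R^2"
    have "2/3 * p * (\<Sum>j\<in>I. (l * norm (c j))^2) \<le> 2/3 * p * (card S * (\<delta> / (4 * R))^2)"
      using sq p by (intro mult_left_mono) auto
    also have "\<dots> - l * (\<delta> * (p * card S) / 2) = - N / 12"
      using R by (simp add: N_def l_def power2_eq_square field_simps)
    also have "\<dots> \<le> - (4/3) * L"
      using big R by (simp add: N_def field_simps)
    finally show ?thesis by simp
  qed
  finally show ?thesis by (simp only: sum_eq)
qed

section \<open>Subsample centroids\<close>

lemma sum_eq_card_scaleR_centroid:
  "finite S \<Longrightarrow> (\<Sum>i\<in>S. x i) = real (card S) *\<^sub>R centroid x S"
  by (cases "S = {}") (simp_all add: centroid_def)

lemma sum_weighted_deviation_eq_centroid_diff: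
  fixes x :: "nat \<Rightarrow> 'a::real_vector"
  assumes S: "finite S"
  shows "(\<Sum>j\<in>S. (of_bool (w j) - p) *\<^sub>R (x j - centroid x S))
         = real (card (S \<inter> {i. w i})) *\<^sub>R (centroid x (S \<inter> {i. w i}) - centroid x S)"
proof -
  let ?S' = "S \<inter> {i. w i}"
  have "(\<Sum>j\<in>S. x j - centroid x S) = 0"
    using S sum_eq_card_scaleR_centroid[OF S, of x] by (simp add: sum_subtractf sum_constant_scaleR)
  then have "(\<Sum>j\<in>S. (of_bool (w j) - p) *\<^sub>R (x j - centroid x S))
      = (\<Sum>j\<in>S. of_bool (w j) *\<^sub>R (x j - centroid x S))"
    by (simp add: scaleR_diff_left sum_subtractf flip: scaleR_sum_right)
  also have "\<dots> = (\<Sum>j\<in>?S'. x j - centroid x S)"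
    using S by (simp add: sum.inter_restrict of_bool_def if_distrib[of "\<lambda>a. a *\<^sub>R _"] cong: if_cong)
  also have "\<dots> = real (card ?S') *\<^sub>R (centroid x ?S' - centroid x S)"
    using S sum_eq_card_scaleR_centroid[of ?S' x]
    by (simp add: sum_subtractf sum_constant_scaleR scaleR_diff_right)
  finally show ?thesis .
qed

lemma subsample_centroid_close:
  fixes x :: "nat \<Rightarrow> 'a::real_normed_vector" and p :: real
  assumes S: "finite S" "S \<noteq> {}" and p: "0 < p"
    and count: "\<bar>\<Sum>j\<in>S. of_bool (w j) - p\<bar> < p * card S / 2"
    and dev: "norm (\<Sum>j\<in>S. (of_bool (w j) - p) *\<^sub>R (x j - centroid x S)) < \<delta> * (p * card S) / 2"
  shows "S \<inter> {i. w i} \<noteq> {}" and "norm (centroid x (S \<inter> {i. w i}) - centroid x S) < \<delta>"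
proof -
  let ?S' = "S \<inter> {i. w i}"
  have "\<bar>real (card ?S') - p * card S\<bar> < p * card S / 2"
    using count S by (simp add: sum_subtractf mult.commute)
  then have m: "p * card S / 2 < card ?S'" by linarith
  moreover have m0: "0 < p * card S / 2" using p S by (simp add: card_gt_0_iff)
  ultimately have pos: "0 < real (card ?S')" by linarith
  then show "?S' \<noteq> {}" by auto
  have "0 < \<delta> * (p * card S)"
    using dev norm_ge_zero[of "\<Sum>j\<in>S. (of_bool (w j) - p) *\<^sub>R (x j - centroid x S)"] by linarith
  moreover have "0 < p * card S" using m0 by simp
  ultimately have \<delta>: "0 < \<delta>" by (rule zero_less_mult_pos2)
  have "card ?S' * norm (centroid x ?S' - centroid x S) < \<delta> * (p * card S) / 2"
    using dev S by (simp add: sum_weighted_deviation_eq_centroid_diff)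
  also have "\<dots> < \<delta> * card ?S'"
    using m \<delta> by simp
  finally show "norm (centroid x ?S' - centroid x S) < \<delta>"
    using pos by (simp add: mult.commute[of \<delta>])
qed

lemma prob_subsample_centroid_far_le:
  fixes x :: "nat \<Rightarrow> 'a::real_inner" and p :: real
  assumes I: "finite I" "S \<subseteq> I" "S \<noteq> {}" and p: "0 < p" "p \<le> 1" and \<delta>: "0 < \<delta>" "\<delta> \<le> R"
    and rad: "\<And>j. j \<in> S \<Longrightarrow> norm (x j - centroid x S) \<le> R"
    and big: "16 * R^2 * L \<le> \<delta>^2 * (p * card S)" and L: "0 \<le> L"
  shows "measure_pmf.prob (Pi_pmf I False (\<lambda>_. bernoulli_pmf p))
           {w. S \<inter> {i. w i} = {} \<or> \<delta> \<le> norm (centroid x (S \<inter> {i. w i}) - centroid x S)}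
         \<le> 4 * exp (- (4/3) * L)"
proof -
  let ?Q = "Pi_pmf I False (\<lambda>_. bernoulli_pmf p)"
  define few where "few = {w. p * card S / 2 \<le> \<bar>\<Sum>j\<in>S. of_bool (w j) - p\<bar>}"
  define off where "off = {w. \<delta> * (p * card S) / 2 \<le> norm (\<Sum>j\<in>S. (of_bool (w j) - p) *\<^sub>R (x j - centroid x S))}"
  have "finite S" using I finite_subset by blast
  then have "{w. S \<inter> {i. w i} = {} \<or> \<delta> \<le> norm (centroid x (S \<inter> {i. w i}) - centroid x S)} \<subseteq> few \<union> off"
    using subsample_centroid_close[of S p w x \<delta> for w] I p by (force simp: few_def off_def not_le)
  then have "measure_pmf.prob ?Q {w. S \<inter> {i. w i} = {} \<or> \<delta> \<le> norm (centroid x (S \<inter> {i. w i}) - centroid x S)}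
      \<le> measure_pmf.prob ?Q (few \<union> off)"
    by (rule measure_pmf.finite_measure_mono) simp
  also have "\<dots> \<le> measure_pmf.prob ?Q few + measure_pmf.prob ?Q off"
    by (rule measure_Un_le) simp_all
  also have "measure_pmf.prob ?Q few \<le> 2 * exp (- (4/3) * L)"
  proof -
    have "\<delta>^2 * (16 * L) \<le> R^2 * (16 * L)"
      using \<delta> L by (intro mult_right_mono power_mono) auto
    with big have "\<delta>^2 * (16 * L) \<le> \<delta>^2 * (p * card S)" by simp
    then have "16 * L \<le> p * card S"
      by (rule mult_left_le_imp_le) (use \<delta> in simp)
    then show ?thesis
      using prob_bernoulli_sum_deviation_le[of I S p 1 1 "\<lambda>_. 1::real" L] I p
      by (simp add: few_def)
  qed
  also have "measure_pmf.prob ?Q off \<le> 2 * exp (- (4/3) * L)"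
    unfolding off_def using I p \<delta> rad big by (intro prob_bernoulli_sum_deviation_le) auto
  finally show ?thesis by simp
qed

lemma norm_diff_centroid_le_max_rad:
  assumes "finite (\<Union>\<Gamma>)" "S \<in> \<Gamma>" "i \<in> S"
  shows "norm (x i - centroid x S) \<le> max_rad x \<Gamma>"
  unfolding max_rad_def
proof (rule Max_ge)
  have "finite (Sigma \<Gamma> (\<lambda>S. S))"
    using assms(1) by (auto intro: finite_UnionD rev_finite_subset)
  moreover have "{norm (x i - centroid x S) | S i. S \<in> \<Gamma> \<and> i \<in> S}
      \<subseteq> (\<lambda>(S, i). norm (x i - centroid x S)) ` Sigma \<Gamma> (\<lambda>S. S)"
    by auto
  ultimately show "finite {norm (x i - centroid x S) | S i. S \<in> \<Gamma> \<and> i \<in> S}"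
    by (meson finite_imageI finite_subset)
qed (use assms in blast)

lemma min_sep_le_norm_diff_centroid:
  assumes "finite \<Gamma>" "S \<in> \<Gamma>" "T \<in> \<Gamma>" "S \<noteq> T"
  shows "min_sep x \<Gamma> \<le> norm (centroid x S - centroid x T)"
  unfolding min_sep_def
proof (rule Min_le)
  have "{norm (centroid x S - centroid x T) | S T. S \<in> \<Gamma> \<and> T \<in> \<Gamma> \<and> S \<noteq> T}
      \<subseteq> (\<lambda>(S, T). norm (centroid x S - centroid x T)) ` (\<Gamma> \<times> \<Gamma>)"
    by auto
  moreover have "finite ((\<lambda>(S, T). norm (centroid x S - centroid x T)) ` (\<Gamma> \<times> \<Gamma>))"
    using assms(1) by simp
  ultimately show "finite {norm (centroid x S - centroid x T) | S T. S \<in> \<Gamma> \<and> T \<in> \<Gamma> \<and> S \<noteq> T}"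
    by (rule finite_subset)
qed (use assms in blast)

lemma min_size_le_card: "finite \<Gamma> \<Longrightarrow> S \<in> \<Gamma> \<Longrightarrow> min_size \<Gamma> \<le> card S"
  by (simp add: min_size_def)

lemma sep_ratio_size_condition:
  assumes L: "0 < L" and r: "r \<le> \<Delta> / 2"
    and size: "16 * max 1 ((sep_ratio r \<Delta>)^2) * ereal L \<le> ereal N"
  shows "r < \<Delta> / 2" and "16 * max 1 ((r / (\<Delta> / 2 - r))^2) * L \<le> N"
proof -
  show lt: "r < \<Delta> / 2"
  proof (rule ccontr)
    assume "\<not> r < \<Delta> / 2"
    with r have "sep_ratio r \<Delta> = \<infinity>" by (simp add: sep_ratio_def)
    with size L show False by (simp add: power2_eq_square max_def)
  qed
  then have "sep_ratio r \<Delta> = ereal (r / (\<Delta> / 2 - r))" by (simp add: sep_ratio_def)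
  with size show "16 * max 1 ((r / (\<Delta> / 2 - r))^2) * L \<le> N"
    by (cases "1 \<le> (r / (\<Delta> / 2 - r))^2") (auto simp: max_def)
qed

lemma four_exp_neg_four_thirds_ln_le:
  fixes y :: real
  assumes y: "6 \<le> y"
  shows "4 * exp (- (4/3) * ln y) \<le> 3 / y"
proof -
  define E where "E = exp (ln y / 3)"
  have "(4/3)^3 \<le> E ^ 3"
    using y by (simp add: E_def power_divide flip: exp_of_nat_mult)
  then have "4 / E \<le> 3"
    by (subst (asm) power_mono_iff) (auto simp: E_def divide_le_eq)
  have "- (4/3) * ln y = - ln y - ln y / 3" by simp
  then have "exp (- (4/3) * ln y) = exp (- ln y) / E"
    unfolding E_def by (simp only: exp_diff)
  also have "\<dots> = 1 / y * (1 / E)"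
    using y by (simp add: exp_minus divide_inverse)
  finally have "4 * exp (- (4/3) * ln y) = 1 / y * (4 / E)" by simp
  also have "\<dots> \<le> 1 / y * 3"
    using \<open>4 / E \<le> 3\<close> y by (intro mult_left_mono) auto
  finally show ?thesis by simp
qed

lemma mult_four_exp_neg_four_thirds_ln_le:
  fixes k d \<epsilon> :: real
  assumes y: "6 \<le> k * (d + 2) / \<epsilon>" and \<epsilon>: "0 < \<epsilon>" and d: "1 \<le> d"
  shows "k * (4 * exp (- (4/3) * ln (k * (d + 2) / \<epsilon>))) \<le> \<epsilon>"
proof -
  have "0 < k * (d + 2)"
    using y \<epsilon> by (simp add: le_divide_eq)
  then have k: "0 < k"
    using d by (simp add: zero_less_mult_iff)
  then have "k * (4 * exp (- (4/3) * ln (k * (d + 2) / \<epsilon>))) \<le> k * (3 / (k * (d + 2) / \<epsilon>))"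
    using four_exp_neg_four_thirds_ln_le[OF y] by (intro mult_left_mono) auto
  also have "\<dots> = 3 * \<epsilon> / (d + 2)"
    using k \<epsilon> d by (simp add: divide_simps)
  also have "\<dots> \<le> \<epsilon>"
    using \<epsilon> d by (simp add: divide_le_eq)
  finally show ?thesis .
qed

lemma dist_less_dist_perturbed_centers:
  fixes y a a' b b' :: "'a::metric_space"
  assumes "dist y a \<le> r" "\<Delta> \<le> dist a b" "dist a' a < \<Delta> / 2 - r" "dist b' b < \<Delta> / 2 - r"
  shows "dist y a' < dist y b'"
  using assms dist_triangle[of y a' a] dist_triangle[of a b y] dist_triangle[of y b b']
  by (simp add: dist_commute)

lemma prob_all_subsample_centroids_close:
  fixes x :: "nat \<Rightarrow> 'a::real_inner" and p :: real
  assumes I: "finite I" "\<And>S. S \<in> \<Gamma> \<Longrightarrow> S \<subseteq> I" "{} \<notin> \<Gamma>"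
    and p: "0 < p" "p \<le> 1" and \<delta>: "0 < \<delta>" "\<delta> \<le> R"
    and rad: "\<And>S j. S \<in> \<Gamma> \<Longrightarrow> j \<in> S \<Longrightarrow> norm (x j - centroid x S) \<le> R"
    and big: "\<And>S. S \<in> \<Gamma> \<Longrightarrow> 16 * R^2 * L \<le> \<delta>^2 * (p * card S)" and L: "0 \<le> L"
  shows "1 - card \<Gamma> * (4 * exp (- (4/3) * L)) \<le> measure_pmf.prob (Pi_pmf I False (\<lambda>_. bernoulli_pmf p))
           {w. \<forall>S\<in>\<Gamma>. S \<inter> {i. w i} \<noteq> {} \<and> norm (centroid x (S \<inter> {i. w i}) - centroid x S) < \<delta>}"
proof -
  let ?Q = "Pi_pmf I False (\<lambda>_. bernoulli_pmf p)"
  define far where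
    "far S = {w. S \<inter> {i. w i} = {} \<or> \<delta> \<le> norm (centroid x (S \<inter> {i. w i}) - centroid x S)}" for S
  have "finite \<Gamma>"
    using I by (metis Pow_iff finite_Pow_iff finite_subset subsetI)
  then have "measure_pmf.prob ?Q (\<Union>S\<in>\<Gamma>. far S) \<le> (\<Sum>S\<in>\<Gamma>. measure_pmf.prob ?Q (far S))"
    by (intro measure_pmf.finite_measure_subadditive_finite) auto
  also have "\<dots> \<le> (\<Sum>S\<in>\<Gamma>. 4 * exp (- (4/3) * L))"
    unfolding far_def using I p \<delta> rad big L
    by (intro sum_mono prob_subsample_centroid_far_le) auto
  finally have "measure_pmf.prob ?Q (\<Union>S\<in>\<Gamma>. far S) \<le> card \<Gamma> * (4 * exp (- (4/3) * L))"
    by simp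
  moreover have "{w. \<forall>S\<in>\<Gamma>. S \<inter> {i. w i} \<noteq> {} \<and> norm (centroid x (S \<inter> {i. w i}) - centroid x S) < \<delta>}
      = UNIV - (\<Union>S\<in>\<Gamma>. far S)"
    by (auto simp: far_def not_le)
  ultimately show ?thesis
    using measure_pmf.prob_compl[of "\<Union>S\<in>\<Gamma>. far S" ?Q] by simp
qed

lemma prob_subsample_nearest_centroid_ge:
  fixes x :: "nat \<Rightarrow> 'a::real_inner" and \<Gamma> :: "nat set set" and p L :: real
  defines "r \<equiv> max_rad x \<Gamma>" and "\<Delta> \<equiv> min_sep x \<Gamma>"
  assumes part: "partition_on I \<Gamma>" "finite I" "\<Gamma> \<noteq> {}"
    and p: "0 < p" "p \<le> 1" and lt: "r < \<Delta> / 2"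
    and size: "16 * max 1 ((r / (\<Delta> / 2 - r))^2) * L \<le> p * min_size \<Gamma>" and L: "0 \<le> L"
  shows "1 - card \<Gamma> * (4 * exp (- (4/3) * L)) \<le> measure_pmf.prob (Pi_pmf I False (\<lambda>_. bernoulli_pmf p))
           {w. (\<forall>S\<in>\<Gamma>. S \<inter> {i. w i} \<noteq> {}) \<and>
               (\<forall>S\<in>\<Gamma>. \<forall>T\<in>\<Gamma>. S \<noteq> T \<longrightarrow> (\<forall>i\<in>S.
                  norm (x i - centroid x (S \<inter> {i. w i}))
                    < norm (x i - centroid x (T \<inter> {i. w i}))))}"
proof -
  define \<delta> where "\<delta> = \<Delta> / 2 - r"
  have \<Gamma>: "\<Union>\<Gamma> = I" "{} \<notin> \<Gamma>" "finite \<Gamma>"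
    using part by (auto simp: partition_on_def intro: finite_UnionD)
  have rad: "norm (x i - centroid x S) \<le> r" if "S \<in> \<Gamma>" "i \<in> S" for S i
    using norm_diff_centroid_le_max_rad[of \<Gamma> S i x] \<Gamma> part(2) that by (simp add: r_def)
  obtain S i where "S \<in> \<Gamma>" "i \<in> S"
    using \<Gamma> part(3) by (metis all_not_in_conv)
  with rad have "0 \<le> r"
    by (meson norm_ge_zero order.trans)
  moreover have "0 < \<delta>" using lt by (simp add: \<delta>_def)
  ultimately have max_sq: "(max \<delta> r)^2 = \<delta>^2 * max 1 ((r / \<delta>)^2)"
    by (cases "\<delta> \<le> r") (auto simp: max_def power_divide le_divide_eq power_mono)
  have big: "16 * (max \<delta> r)^2 * L \<le> \<delta>^2 * (p * card S)" if "S \<in> \<Gamma>" for S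
  proof -
    have "16 * (max \<delta> r)^2 * L = \<delta>^2 * (16 * max 1 ((r / \<delta>)^2) * L)"
      by (simp add: max_sq)
    also have "\<dots> \<le> \<delta>^2 * (p * min_size \<Gamma>)"
      using size by (intro mult_left_mono) (simp_all add: \<delta>_def)
    also have "\<dots> \<le> \<delta>^2 * (p * card S)"
      using min_size_le_card[OF \<Gamma>(3) that] p by (intro mult_left_mono) auto
    finally show ?thesis .
  qed
  have "1 - card \<Gamma> * (4 * exp (- (4/3) * L)) \<le> measure_pmf.prob (Pi_pmf I False (\<lambda>_. bernoulli_pmf p))
           {w. \<forall>S\<in>\<Gamma>. S \<inter> {i. w i} \<noteq> {} \<and> norm (centroid x (S \<inter> {i. w i}) - centroid x S) < \<delta>}"
    using \<Gamma> part p \<open>0 < \<delta>\<close> rad big L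
    by (intro prob_all_subsample_centroids_close[where R = "max \<delta> r"]) (auto simp: le_max_iff_disj)
  moreover have "dist (x i) (centroid x (S \<inter> {i. w i})) < dist (x i) (centroid x (T \<inter> {i. w i}))"
    if "\<forall>S\<in>\<Gamma>. norm (centroid x (S \<inter> {i. w i}) - centroid x S) < \<delta>"
      "S \<in> \<Gamma>" "T \<in> \<Gamma>" "S \<noteq> T" "i \<in> S" for w S T i
    using that rad[of S i] min_sep_le_norm_diff_centroid[OF \<Gamma>(3), of S T x]
    by (intro dist_less_dist_perturbed_centers[where r = r and \<Delta> = \<Delta>]) (auto simp: dist_norm \<Delta>_def \<delta>_def)
  ultimately show ?thesis
    by (elim order.trans, intro measure_pmf.finite_measure_mono) (simp_all add: dist_norm, blast)
qed

theorem lemma16: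
  fixes x :: "nat \<Rightarrow> real ^ 'd" and \<Gamma> :: "nat set set" and n :: nat
    and p \<epsilon> :: real
  assumes part: "partition_on {..<n} \<Gamma>"
    and k2: "card \<Gamma> \<ge> 2"
    and p: "0 < p" "p \<le> 1"
    and eps: "0 < \<epsilon>" "\<epsilon> < 1"
    and r_le: "max_rad x \<Gamma> \<le> min_sep x \<Gamma> / 2"
    and size: "ereal (p * real (min_size \<Gamma>))
       \<ge> 16 * max 1 ((sep_ratio (max_rad x \<Gamma>) (min_sep x \<Gamma>))^2)
            * ereal (ln (real (card \<Gamma>) * (real CARD('d) + 2) / \<epsilon>))"
  shows "measure_pmf.prob (sample_pmf n p)
           {w. (\<forall>S\<in>\<Gamma>. S \<inter> {i. w i} \<noteq> {}) \<and>
               (\<forall>S\<in>\<Gamma>. \<forall>T\<in>\<Gamma>. S \<noteq> T \<longrightarrow> (\<forall>i\<in>S.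
                  norm (x i - centroid x (S \<inter> {i. w i}))
                    < norm (x i - centroid x (T \<inter> {i. w i}))))}
         \<ge> 1 - \<epsilon>"
proof -
  define y where "y = real (card \<Gamma>) * (real CARD('d) + 2) / \<epsilon>"
  have y: "6 \<le> y"
    using k2 eps mult_mono[of 2 "real (card \<Gamma>)" 3 "real CARD('d) + 2"]
    by (simp add: y_def le_divide_eq)
  then have "0 < ln y" by simp
  with r_le size have "max_rad x \<Gamma> < min_sep x \<Gamma> / 2"
    and "16 * max 1 ((max_rad x \<Gamma> / (min_sep x \<Gamma> / 2 - max_rad x \<Gamma>))^2) * ln y \<le> p * min_size \<Gamma>"
    using sep_ratio_size_condition by (simp_all add: y_def)
  moreover have "card \<Gamma> * (4 * exp (- (4/3) * ln y)) \<le> \<epsilon>"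
    using mult_four_exp_neg_four_thirds_ln_le y eps by (simp add: y_def)
  ultimately show ?thesis
    using part k2 p \<open>0 < ln y\<close> unfolding sample_pmf_def
    by (intro order.trans[OF _ prob_subsample_nearest_centroid_ge[where L = "ln y"]]) auto
qed

end
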